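(* Given a Stackelberg game $(G,L,F)$, the problem f-SCE-PA of finding some SCE-PA $\mathbf{x}\in\mathbf{X}^{SCE\text{-}PA}$ can be solved with $|L|+1$ queries to a stability oracle $\mathcal{O}$ for $G$.
   Context: A finite game is $G=(N,\{S_p\}_{p\in N},\{u_p\}_{p\in N})$ with players $N=\{1,\dots,n\}$, finite nonempty strategy sets $S_p$, and utilities $u_p:S\to\mathbb{R}$ on $S=\prod_{p\in N}S_p$; write $s=(s_p,s_{-p})$ with $s_{-p}\in S_{-p}=\prod_{q\neq p}S_q$. $\mathcal{X}=\Delta(S)$ is the set of probability distributions on $S$ and $u_p(x)=\sum_{s\in S}x(s)u_p(s)$ for $x\in\mathcal{X}$. For $P\subseteq N$, $\mathcal{X}^{CE}_P$ is the set of $x\in\mathcal{X}$ such that for every $p\in P$ and all $s_p\neq s_p'\in S_p$: $\sum_{s_{-p}\in S_{-p}} x(s_p,s_{-p})\,(u_p(s_p,s_{-p})-u_p(s_p',s_{-p}))\ge 0$; $\mathcal{X}^{CE}=\mathcal{X}^{CE}_N$ is the set of correlated equilibria of $G$. A Stackelberg game (SG) is a triple $(G,L,F)$ with $L\cup F=N$ and $L\cap F=\emptyset$ (leaders and followers). For $P\subseteq N$, $\Pi_P$ is the set of ordered subsets of $P$ (finite sequences of pairwise distinct elements of $P$, including the empty sequence $\varnothing$); for $\pi\in\Pi_P$ and $p\in P$ not occurring in $\pi$, $\pi p$ is $\pi$ with $p$ appended; when used as a set, $\pi$ means its set of entries. $\mathbf{X}=\prod_{\pi\in\Pi_L}\mathcal{X}^{CE}_{\pi\cup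 F}$, with elements $\mathbf{x}=[x_\pi]_{\pi\in\Pi_L}$. For $\mathbf{x}\in\mathbf{X}$ and $\pi\in\Pi_L$, $x_\pi$ is stable if $u_p(x_\pi)\ge u_p(x_{\pi p})$ for all $p\in L\setminus\pi$; $\mathbf{x}$ is stable if $x_\varnothing$ is stable, and perfectly stable if $x_\pi$ is stable for every $\pi\in\Pi_L$; $\mathbf{X}^{S}$ and $\mathbf{X}^{PS}$ denote the sets of stable and perfectly stable elements of $\mathbf{X}$. For $\mathbf{X}'\subseteq\mathbf{X}$ and $\pi\in\Pi_L$, $\mathcal{P}_{L\setminus\pi}(\mathbf{X}')$ is the set of Pareto optimal elements of $\{x'_\pi:\mathbf{x}'\in\mathbf{X}'\}$ with respect to the objectives $u_p$, $p\in L\setminus\pi$ (an element $y$ of the set is Pareto optimal if no $y'$ in the set satisfies $u_p(y')\ge u_p(y)$ for all $p\in L\setminus\pi$ with strict inequality for some such $p$). $\mathbf{x}\in\mathbf{X}$ is an SCE-PA if $\mathbf{x}\in\mathbf{X}^{PS}$ and $x_\varnothing\in\mathcal{P}_L(\mathbf{X}^{PS})$; $\mathbf{X}^{SCE\text{-}PA}$ is the set of SCE-PAs. A stability oracle $\mathcal{O}(G,c,L^\ast,\{x_p\}_{p\in L'})$ is an algorithm that, given the game $G$, a coefficient vector $c=[c_p]\in[-1,1]^n$, a set $L^\ast\subseteq N$, and distributions $x_p\in\mathcal{X}$ for $p$ in some $L'\subseteq L^\ast$, returns some $x\in\mathcal{X}^{CE}_{N\setminus L^\ast}$ maximizing $\sum_{p\in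 N}\sum_{s\in S}c_pu_p(s)x(s)$ subject to the stability constraints $u_p(x)\ge u_p(x_p)$ for all $p\in L'$. *)

theory Defs
  imports Complex_Main "HOL-Library.FuncSet"
begin

text \<open>A finite game: players N (finite set of type 'p), strategy sets S p (of type 's),
  utilities u p on strategy profiles.\<close>

type_synonym ('p,'s) dist = "('p \<Rightarrow> 's) \<Rightarrow> real"

definition is_dist :: "'p set \<Rightarrow> ('p \<Rightarrow> 's set) \<Rightarrow> ('p,'s) dist \<Rightarrow> bool" where
  "is_dist N S x \<longleftrightarrow> (\<forall>s. 0 \<le> x s) \<and> (\<forall>s. s \<notin> PiE N S \<longrightarrow> x s = 0)
     \<and> (\<Sum>s\<in>PiE N S. x s) = 1"

definition Eutil :: "'p set \<Rightarrow> ('p \<Rightarrow> 's set) \<Rightarrow> ('p \<Rightarrow> ('p \<Rightarrow> 's) \<Rightarrow> real)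
    \<Rightarrow> 'p \<Rightarrow> ('p,'s) dist \<Rightarrow> real" where
  "Eutil N S u p x = (\<Sum>s\<in>PiE N S. x s * u p s)"

definition CE :: "'p set \<Rightarrow> ('p \<Rightarrow> 's set) \<Rightarrow> ('p \<Rightarrow> ('p \<Rightarrow> 's) \<Rightarrow> real)
    \<Rightarrow> 'p set \<Rightarrow> ('p,'s) dist set" where
  "CE N S u P = {x. is_dist N S x \<and>
     (\<forall>p\<in>P. \<forall>a\<in>S p. \<forall>a'\<in>S p. a \<noteq> a' \<longrightarrow>
        0 \<le> (\<Sum>s\<in>{s\<in>PiE N S. s p = a}. x s * (u p s - u p (s(p := a')))))}"

definition ordsubs :: "'p set \<Rightarrow> 'p list set" where
  "ordsubs P = {\<pi>. distinct \<pi> \<and> set \<pi> \<subseteq> P}"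

definition BigX :: "'p set \<Rightarrow> ('p \<Rightarrow> 's set) \<Rightarrow> ('p \<Rightarrow> ('p \<Rightarrow> 's) \<Rightarrow> real)
    \<Rightarrow> 'p set \<Rightarrow> 'p set \<Rightarrow> ('p list \<Rightarrow> ('p,'s) dist) set" where
  "BigX N S u L F = {xx. \<forall>\<pi>\<in>ordsubs L. xx \<pi> \<in> CE N S u (set \<pi> \<union> F)}"

definition stable_at :: "'p set \<Rightarrow> ('p \<Rightarrow> 's set) \<Rightarrow> ('p \<Rightarrow> ('p \<Rightarrow> 's) \<Rightarrow> real)
    \<Rightarrow> 'p set \<Rightarrow> ('p list \<Rightarrow> ('p,'s) dist) \<Rightarrow> 'p list \<Rightarrow> bool" where
  "stable_at N S u L xx \<pi> \<longleftrightarrow>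
     (\<forall>p\<in>L - set \<pi>. Eutil N S u p (xx \<pi>) \<ge> Eutil N S u p (xx (\<pi> @ [p])))"

definition XS :: "'p set \<Rightarrow> ('p \<Rightarrow> 's set) \<Rightarrow> ('p \<Rightarrow> ('p \<Rightarrow> 's) \<Rightarrow> real)
    \<Rightarrow> 'p set \<Rightarrow> 'p set \<Rightarrow> ('p list \<Rightarrow> ('p,'s) dist) set" where
  "XS N S u L F = {xx \<in> BigX N S u L F. stable_at N S u L xx []}"

definition XPS :: "'p set \<Rightarrow> ('p \<Rightarrow> 's set) \<Rightarrow> ('p \<Rightarrow> ('p \<Rightarrow> 's) \<Rightarrow> real)
    \<Rightarrow> 'p set \<Rightarrow> 'p set \<Rightarrow> ('p list \<Rightarrow> ('p,'s) dist) set" where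
  "XPS N S u L F = {xx \<in> BigX N S u L F. \<forall>\<pi>\<in>ordsubs L. stable_at N S u L xx \<pi>}"

definition pareto :: "'p set \<Rightarrow> ('p \<Rightarrow> 's set) \<Rightarrow> ('p \<Rightarrow> ('p \<Rightarrow> 's) \<Rightarrow> real)
    \<Rightarrow> 'p set \<Rightarrow> 'p list \<Rightarrow> ('p list \<Rightarrow> ('p,'s) dist) set \<Rightarrow> ('p,'s) dist set" where
  "pareto N S u L \<pi> X' =
    (let Y = (\<lambda>xx. xx \<pi>) ` X' in
     {y\<in>Y. \<not> (\<exists>y'\<in>Y. (\<forall>p\<in>L - set \<pi>. Eutil N S u p y' \<ge> Eutil N S u p y)
                      \<and> (\<exists>p\<in>L - set \<pi>. Eutil N S u p y' > Eutil N S u p y))})"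

definition SCE_PA :: "'p set \<Rightarrow> ('p \<Rightarrow> 's set) \<Rightarrow> ('p \<Rightarrow> ('p \<Rightarrow> 's) \<Rightarrow> real)
    \<Rightarrow> 'p set \<Rightarrow> 'p set \<Rightarrow> ('p list \<Rightarrow> ('p,'s) dist) set" where
  "SCE_PA N S u L F = {xx \<in> XPS N S u L F. xx [] \<in> pareto N S u L [] (XPS N S u L F)}"

text \<open>Stability oracle for the game (N,S,u). A query is (c, L*, xs) where xs is a partial map
  giving x_p for p in L' = dom xs. The answer is a distribution.\<close>
type_synonym ('p,'s) query = "('p \<Rightarrow> real) \<times> 'p set \<times> ('p \<Rightarrow> ('p,'s) dist option)"

definition oracle_feasible :: "'p set \<Rightarrow> ('p \<Rightarrow> 's set) \<Rightarrow> ('p \<Rightarrow> ('p \<Rightarrow> 's) \<Rightarrow> real)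
    \<Rightarrow> 'p set \<Rightarrow> ('p \<Rightarrow> ('p,'s) dist option) \<Rightarrow> ('p,'s) dist set" where
  "oracle_feasible N S u Ls xs =
     {x \<in> CE N S u (N - Ls). \<forall>p y. xs p = Some y \<longrightarrow> Eutil N S u p x \<ge> Eutil N S u p y}"

definition oracle_obj :: "'p set \<Rightarrow> ('p \<Rightarrow> 's set) \<Rightarrow> ('p \<Rightarrow> ('p \<Rightarrow> 's) \<Rightarrow> real)
    \<Rightarrow> ('p \<Rightarrow> real) \<Rightarrow> ('p,'s) dist \<Rightarrow> real" where
  "oracle_obj N S u c x = (\<Sum>p\<in>N. \<Sum>s\<in>PiE N S. c p * u p s * x s)"

text \<open>A valid stability oracle: on every well-formed query whose problem is feasible, it returns
  a maximizer (any one). On ill-formed or infeasible queries its answer is unconstrained.\<close>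
definition valid_oracle :: "'p set \<Rightarrow> ('p \<Rightarrow> 's set) \<Rightarrow> ('p \<Rightarrow> ('p \<Rightarrow> 's) \<Rightarrow> real)
    \<Rightarrow> (('p,'s) query \<Rightarrow> ('p,'s) dist) \<Rightarrow> bool" where
  "valid_oracle N S u orc \<longleftrightarrow>
    (\<forall>c Ls xs. (\<forall>p\<in>N. \<bar>c p\<bar> \<le> 1) \<and> Ls \<subseteq> N \<and> dom xs \<subseteq> Ls
       \<and> (\<forall>p y. xs p = Some y \<longrightarrow> is_dist N S y)
       \<and> oracle_feasible N S u Ls xs \<noteq> {}
     \<longrightarrow> orc (c, Ls, xs) \<in> oracle_feasible N S u Ls xs
         \<and> (\<forall>y\<in>oracle_feasible N S u Ls xs.
               oracle_obj N S u c y \<le> oracle_obj N S u c (orc (c, Ls, xs))))"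

text \<open>Adaptive oracle algorithms: either return a result, or ask a query and continue
  depending on the answer.\<close>
datatype ('q,'a,'r) oprog = Ret 'r | Ask 'q "'a \<Rightarrow> ('q,'a,'r) oprog"

primrec run :: "('q \<Rightarrow> 'a) \<Rightarrow> ('q,'a,'r) oprog \<Rightarrow> 'r" where
  "run orc (Ret r) = r"
| "run orc (Ask q k) = run orc (k (orc q))"

primrec num_queries :: "('q \<Rightarrow> 'a) \<Rightarrow> ('q,'a,'r) oprog \<Rightarrow> nat" where
  "num_queries orc (Ret r) = 0"
| "num_queries orc (Ask q k) = Suc (num_queries orc (k (orc q)))"

end

theory Submission
  imports Defs
begin

text \<open>For each leader \<open>p\<close> one oracle query yields a correlated equilibrium \<open>W\<^sub>p\<close> of the whole game
  that minimises \<open>u\<^sub>p\<close>, the threat of the other players against \<open>p\<close>; a last query maximises the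
  leaders' total utility over the equilibria of the followers that give every leader at least
  its threat value. Answering the empty sequence by this maximiser and every other sequence by
  the threat point of its last leader is perfectly stable, since a leader who commits only gets
  its threat value, and the maximiser is Pareto optimal among all perfectly stable choices. The
  queries are well posed because correlated equilibria exist (Hart and Schmeidler), which follows
  from Fourier--Motzkin elimination and the existence of stationary distributions.\<close>

inductive_set positive_combinations :: "('j \<Rightarrow> real) set \<Rightarrow> ('j \<Rightarrow> real) set" for R where
  gen: "r \<in> R \<Longrightarrow> r \<in> positive_combinations R"
| add: "v \<in> positive_combinations R \<Longrightarrow> w \<in> positive_combinations R
          \<Longrightarrow> (\<lambda>j. v j + w j) \<in> positive_combinations R"
| scale: "c > 0 \<Longrightarrow> v \<in> positive_combinations R \<Longrightarrow> (\<lambda>j. c * v j) \<in> positive_combinations R"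

lemma positive_combinations_subset:
  "v \<in> positive_combinations R' \<Longrightarrow> R' \<subseteq> positive_combinations R \<Longrightarrow> v \<in> positive_combinations R"
  by (induction v rule: positive_combinations.induct) (auto intro: positive_combinations.intros)

lemma positive_combinations_nonneg_coord:
  "v \<in> positive_combinations R \<Longrightarrow> (\<And>r. r \<in> R \<Longrightarrow> 0 \<le> r k) \<Longrightarrow> 0 \<le> v k"
  by (induction v rule: positive_combinations.induct) auto

lemma positive_combinations_image_weights:
  assumes "v \<in> positive_combinations (f ` I)" "finite I"
  shows "\<exists>w. (\<forall>i\<in>I. 0 \<le> w i) \<and> 0 < (\<Sum>i\<in>I. w i) \<and> (\<forall>j. v j = (\<Sum>i\<in>I. w i * f i j))"
  using assms
proof (induction v rule: positive_combinations.induct)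
  case (gen r)
  then obtain i0 where i0: "i0 \<in> I" "r = f i0" by auto
  let ?w = "\<lambda>i. if i = i0 then 1 else 0 :: real"
  have "(\<Sum>i\<in>I. ?w i * f i j) = (\<Sum>i\<in>I. if i = i0 then f i j else 0)" for j
    by (rule sum.cong) auto
  then have "(\<Sum>i\<in>I. ?w i * f i j) = f i0 j" for j
    using gen.prems i0 by simp
  then show ?case using i0 gen.prems by (intro exI[of _ ?w]) simp
next
  case (add v w)
  then obtain w1 w2 where
    "\<forall>i\<in>I. 0 \<le> w1 i" "0 < (\<Sum>i\<in>I. w1 i)" "\<forall>j. v j = (\<Sum>i\<in>I. w1 i * f i j)"
    "\<forall>i\<in>I. 0 \<le> w2 i" "0 < (\<Sum>i\<in>I. w2 i)" "\<forall>j. w j = (\<Sum>i\<in>I. w2 i * f i j)"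
    by blast
  then show ?case
    by (intro exI[of _ "\<lambda>i. w1 i + w2 i"]) (auto simp: sum.distrib distrib_right)
next
  case (scale c v)
  then obtain w where
    "\<forall>i\<in>I. 0 \<le> w i" "0 < (\<Sum>i\<in>I. w i)" "\<forall>j. v j = (\<Sum>i\<in>I. w i * f i j)"
    by blast
  with scale.hyps show ?case
    by (intro exI[of _ "\<lambda>i. c * w i"]) (auto simp: mult.assoc simp flip: sum_distrib_left)
qed

lemma finite_strict_separation_nonneg:
  fixes f g :: "'a \<Rightarrow> real"
  assumes "finite A" "finite B"
    and "\<And>a b. a \<in> A \<Longrightarrow> b \<in> B \<Longrightarrow> f a < g b" "\<And>b. b \<in> B \<Longrightarrow> 0 < g b"
  shows "\<exists>t\<ge>0. (\<forall>a\<in>A. f a < t) \<and> (\<forall>b\<in>B. t < g b)"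
proof -
  define lo where "lo = Max (insert 0 (f ` A))"
  have lo: "0 \<le> lo" "\<And>a. a \<in> A \<Longrightarrow> f a \<le> lo"
    using assms(1) by (auto simp: lo_def)
  have "lo \<in> insert 0 (f ` A)"
    unfolding lo_def using assms(1) by (intro Max_in) auto
  then have lo_less: "\<And>b. b \<in> B \<Longrightarrow> lo < g b"
    using assms(3,4) by auto
  show ?thesis
  proof (cases "B = {}")
    case True
    then show ?thesis using lo by (intro exI[of _ "lo + 1"]) force
  next
    case False
    define hi where "hi = Min (g ` B)"
    have hi: "\<And>b. b \<in> B \<Longrightarrow> hi \<le> g b" using assms(2) by (auto simp: hi_def)
    have "hi \<in> g ` B" unfolding hi_def using assms(2) False by (intro Min_in) auto
    then have "lo < hi" using lo_less by auto
    then show ?thesis using lo hi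
      by (intro exI[of _ "(lo + hi) / 2"]) (auto, fastforce+)
  qed
qed

text \<open>Fourier--Motzkin elimination of one coordinate: the inequalities \<open>f r + g r * t < 0\<close>
  have a common solution \<open>t \<ge> 0\<close> as soon as all pairwise positive combinations cancelling \<open>g\<close> do.\<close>
lemma exists_nonneg_shift_negative:
  fixes f g :: "'a \<Rightarrow> real"
  assumes "finite R"
    and nonneg: "\<And>r. r \<in> R \<Longrightarrow> 0 \<le> g r \<Longrightarrow> f r < 0"
    and pairs: "\<And>p n. p \<in> R \<Longrightarrow> n \<in> R \<Longrightarrow> 0 < g p \<Longrightarrow> g n < 0 \<Longrightarrow> - g n * f p + g p * f n < 0"
  shows "\<exists>t\<ge>0. \<forall>r\<in>R. f r + g r * t < 0"
proof -
  define Pos where "Pos = {r\<in>R. 0 < g r}"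
  define Neg where "Neg = {r\<in>R. g r < 0}"
  have "\<exists>t\<ge>0. (\<forall>n\<in>Neg. f n / - g n < t) \<and> (\<forall>p\<in>Pos. t < - f p / g p)"
  proof (rule finite_strict_separation_nonneg)
    show "finite Neg" "finite Pos" using assms(1) by (auto simp: Pos_def Neg_def)
    show "0 < - f p / g p" if "p \<in> Pos" for p
      using nonneg[of p] that by (auto simp: Pos_def intro: divide_neg_pos)
    show "f n / - g n < - f p / g p" if "n \<in> Neg" "p \<in> Pos" for n p
    proof -
      have "f n * g p < - f p * - g n" using pairs[of p n] that by (auto simp: Pos_def Neg_def algebra_simps)
      then show ?thesis using that by (simp add: Pos_def Neg_def field_simps)
    qed
  qed
  then obtain t where t: "t \<ge> 0" "\<forall>n\<in>Neg. f n / - g n < t" "\<forall>p\<in>Pos. t < - f p / g p"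
    by blast
  have "f r + g r * t < 0" if r: "r \<in> R" for r
  proof (cases "g r" "0 :: real" rule: linorder_cases)
    case less
    then have "f r / - g r < t" using t(2) r by (auto simp: Neg_def)
    then show ?thesis using less by (simp add: field_simps)
  next
    case equal
    then show ?thesis using nonneg[OF r] by simp
  next
    case greater
    then have "t < - f r / g r" using t(3) r by (auto simp: Pos_def)
    then show ?thesis using greater by (simp add: field_simps)
  qed
  then show ?thesis using t(1) by blast
qed

lemma positive_combinations_cancel:
  assumes "p \<in> R" "n \<in> R" "0 < p k" "n k < 0"
  shows "(\<lambda>j. - n k * p j + p k * n j) \<in> positive_combinations R"
proof -
  have "(\<lambda>j. - n k * p j) \<in> positive_combinations R" "(\<lambda>j. p k * n j) \<in> positive_combinations R"
    using positive_combinations.scale[OF _ positive_combinations.gen, of "- n k" p R]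
      positive_combinations.scale[OF _ positive_combinations.gen, of "p k" n R] assms
    by auto
  from positive_combinations.add[OF this] show ?thesis by simp
qed

theorem positive_combination_or_separation:
  fixes J :: "'j set" and R :: "('j \<Rightarrow> real) set"
  assumes "finite J" "finite R"
  shows "(\<exists>v\<in>positive_combinations R. \<forall>j\<in>J. 0 \<le> v j) \<or>
         (\<exists>\<nu>. (\<forall>j\<in>J. 0 \<le> \<nu> j) \<and> (\<forall>r\<in>R. (\<Sum>j\<in>J. r j * \<nu> j) < 0))"
  using assms
proof (induction J arbitrary: R rule: finite_induct)
  case empty
  show ?case
  proof (cases "R = {}")
    case False
    then obtain r where "r \<in> R" by blast
    then show ?thesis by (blast intro: positive_combinations.gen)
  qed simp
next
  case (insert k J R)
  define comb where "comb = (\<lambda>(p::'j \<Rightarrow> real, n::'j \<Rightarrow> real) j. - n k * p j + p k * n j)"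
  define R' where "R' = {r\<in>R. 0 \<le> r k} \<union> comb ` ({p\<in>R. 0 < p k} \<times> {n\<in>R. n k < 0})"
  have R'_sub: "R' \<subseteq> positive_combinations R"
  proof
    fix r assume "r \<in> R'"
    then consider "r \<in> R" | p n where "p \<in> R" "n \<in> R" "0 < p k" "n k < 0" "r = comb (p, n)"
      unfolding R'_def by auto
    then show "r \<in> positive_combinations R"
    proof cases
      case 2
      then show ?thesis using positive_combinations_cancel[of p R n k] by (simp add: comb_def)
    qed (rule positive_combinations.gen)
  qed
  have R'_nonneg: "\<And>r. r \<in> R' \<Longrightarrow> 0 \<le> r k"
    unfolding R'_def comb_def by auto
  have "finite R'" using insert.prems unfolding R'_def by auto
  from insert.IH[OF this] show ?case
  proof (elim disjE exE conjE bexE)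
    fix v assume v: "v \<in> positive_combinations R'" "\<forall>j\<in>J. 0 \<le> v j"
    have "0 \<le> v k" using positive_combinations_nonneg_coord[OF v(1) R'_nonneg] .
    then show ?thesis using v positive_combinations_subset[OF v(1) R'_sub] by auto
  next
    fix \<nu> assume \<nu>: "\<forall>j\<in>J. 0 \<le> \<nu> j" "\<forall>r\<in>R'. (\<Sum>j\<in>J. r j * \<nu> j) < 0"
    define ip where "ip r = (\<Sum>j\<in>J. r j * \<nu> j)" for r :: "'j \<Rightarrow> real"
    have ip_comb: "ip (comb (p, n)) = - n k * ip p + p k * ip n" for p n
    proof -
      have "ip (comb (p, n)) = (\<Sum>j\<in>J. - n k * (p j * \<nu> j) + p k * (n j * \<nu> j))"
        unfolding ip_def comb_def by (rule sum.cong) (auto simp: algebra_simps)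
      then show ?thesis by (simp only: sum.distrib flip: sum_distrib_left ip_def)
    qed
    have "\<exists>t\<ge>0. \<forall>r\<in>R. ip r + r k * t < 0"
    proof (rule exists_nonneg_shift_negative)
      show "finite R" by (rule insert.prems)
      show "ip r < 0" if "r \<in> R" "0 \<le> r k" for r
        using that \<nu>(2) unfolding ip_def R'_def by blast
      show "- n k * ip p + p k * ip n < 0" if "p \<in> R" "n \<in> R" "0 < p k" "n k < 0" for p n
      proof -
        have "comb (p, n) \<in> R'" using that unfolding R'_def by blast
        then have "ip (comb (p, n)) < 0" using \<nu>(2) unfolding ip_def by blast
        then show ?thesis by (simp only: ip_comb)
      qed
    qed
    then obtain t where "t \<ge> 0" "\<forall>r\<in>R. ip r + r k * t < 0" by blast
    moreover have "(\<Sum>j\<in>insert k J. r j * (\<nu>(k := t)) j) = ip r + r k * t" for r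
    proof -
      have "(\<Sum>j\<in>J. r j * (\<nu>(k := t)) j) = ip r"
        unfolding ip_def using insert.hyps(2) by (intro sum.cong) auto
      then show ?thesis using insert.hyps by simp
    qed
    ultimately show ?thesis using \<nu>(1)
      by (intro disjI2 exI[of _ "\<nu>(k := t)"]) auto
  qed
qed

definition generator :: "'a set \<Rightarrow> ('a \<Rightarrow> 'a \<Rightarrow> real) \<Rightarrow> 'a \<Rightarrow> 'a \<Rightarrow> real" where
  "generator A Q a b = Q a b - (if a = b then (\<Sum>c\<in>A. Q a c) else 0)"

lemma generator_row_sum:
  assumes "finite A" "a \<in> A"
  shows "(\<Sum>b\<in>A. generator A Q a b) = 0"
  using assms by (simp add: generator_def sum_subtractf)

lemma generator_row_times:
  assumes "finite A" "a \<in> A"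
  shows "(\<Sum>b\<in>A. generator A Q a b * \<nu> b) = (\<Sum>b\<in>A. Q a b * (\<nu> b - \<nu> a))"
proof -
  have "(\<Sum>b\<in>A. generator A Q a b * \<nu> b)
      = (\<Sum>b\<in>A. Q a b * \<nu> b - (if a = b then (\<Sum>c\<in>A. Q a c) * \<nu> b else 0))"
    unfolding generator_def by (rule sum.cong) (auto simp: algebra_simps)
  also have "\<dots> = (\<Sum>b\<in>A. Q a b * \<nu> b) - (\<Sum>c\<in>A. Q a c) * \<nu> a"
    using assms by (simp add: sum_subtractf)
  finally show ?thesis
    by (simp add: right_diff_distrib sum_subtractf sum_distrib_right)
qed

lemma generator_column_times:
  assumes "finite A" "b \<in> A"
  shows "(\<Sum>a\<in>A. w a * generator A Q a b) = (\<Sum>a\<in>A. w a * Q a b) - w b * (\<Sum>c\<in>A. Q b c)"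
proof -
  have "(\<Sum>a\<in>A. w a * generator A Q a b)
      = (\<Sum>a\<in>A. w a * Q a b - (if a = b then w b * (\<Sum>c\<in>A. Q b c) else 0))"
    unfolding generator_def by (rule sum.cong) (auto simp: algebra_simps)
  then show ?thesis using assms by (simp add: sum_subtractf)
qed

text \<open>A stationary distribution \<open>\<mu> Q = \<mu> \<cdot> diag(row sums)\<close> exists because no weighting \<open>\<nu>\<close> can
  make every row of the generator strictly negative: the row of a minimiser of \<open>\<nu>\<close> is nonnegative.\<close>
lemma stationary_distribution_exists:
  fixes Q :: "'a \<Rightarrow> 'a \<Rightarrow> real"
  assumes A: "finite A" "A \<noteq> {}" and Q: "\<And>a b. a \<in> A \<Longrightarrow> b \<in> A \<Longrightarrow> 0 \<le> Q a b"
  shows "\<exists>\<mu>. (\<forall>a\<in>A. 0 \<le> \<mu> a) \<and> (\<Sum>a\<in>A. \<mu> a) = 1 \<and>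
           (\<forall>b\<in>A. (\<Sum>a\<in>A. \<mu> a * Q a b) = \<mu> b * (\<Sum>c\<in>A. Q b c))"
proof -
  let ?M = "generator A Q"
  have "\<not> (\<forall>a\<in>A. (\<Sum>b\<in>A. ?M a b * \<nu> b) < 0)" for \<nu>
  proof -
    have "Min (\<nu> ` A) \<in> \<nu> ` A" using A by simp
    then obtain a0 where a0: "a0 \<in> A" "\<nu> a0 = Min (\<nu> ` A)" by auto
    then have "\<forall>b\<in>A. \<nu> a0 \<le> \<nu> b" using A(1) by simp
    then have "0 \<le> (\<Sum>b\<in>A. ?M a0 b * \<nu> b)"
      using Q a0(1) by (simp add: generator_row_times[OF A(1) a0(1)] sum_nonneg)
    then show ?thesis using a0(1) by force
  qed
  then obtain v where v: "v \<in> positive_combinations (?M ` A)" "\<forall>b\<in>A. 0 \<le> v b"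
    using positive_combination_or_separation[OF A(1), of "?M ` A"] A(1) by auto
  obtain w where w: "\<forall>a\<in>A. 0 \<le> w a" "0 < (\<Sum>a\<in>A. w a)" "\<forall>b. v b = (\<Sum>a\<in>A. w a * ?M a b)"
    using positive_combinations_image_weights[OF v(1) A(1)] by blast
  have "(\<Sum>b\<in>A. v b) = (\<Sum>b\<in>A. \<Sum>a\<in>A. w a * ?M a b)"
    using w(3) by simp
  also have "\<dots> = (\<Sum>a\<in>A. w a * (\<Sum>b\<in>A. ?M a b))"
    by (subst sum.swap) (simp add: sum_distrib_left)
  also have "\<dots> = 0" using generator_row_sum[OF A(1)] by simp
  finally have "\<forall>b\<in>A. v b = 0" using sum_nonneg_eq_0_iff[OF A(1)] v(2) by blast
  then have stat: "(\<Sum>a\<in>A. w a * Q a b) = w b * (\<Sum>c\<in>A. Q b c)" if "b \<in> A" for b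
    using w(3) generator_column_times[OF A(1) that, of w Q] that by simp
  define W where "W = (\<Sum>a\<in>A. w a)"
  show ?thesis
  proof (intro exI[of _ "\<lambda>a. w a / W"] conjI ballI)
    show "0 \<le> w a / W" if "a \<in> A" for a using w(1,2) that by (simp add: W_def)
    show "(\<Sum>a\<in>A. w a / W) = 1" using w(2) by (simp add: W_def flip: sum_divide_distrib)
    show "(\<Sum>a\<in>A. w a / W * Q a b) = w b / W * (\<Sum>c\<in>A. Q b c)" if "b \<in> A" for b
      using stat[OF that] by (simp add: sum_divide_distrib[symmetric])
  qed
qed

definition deviations :: "'p set \<Rightarrow> ('p \<Rightarrow> 's set) \<Rightarrow> ('p \<times> 's \<times> 's) set" where
  "deviations N S = Sigma N (\<lambda>p. S p \<times> S p)"

definition regret :: "('p \<Rightarrow> ('p \<Rightarrow> 's) \<Rightarrow> real) \<Rightarrow> ('p \<Rightarrow> 's) \<Rightarrow> 'p \<times> 's \<times> 's \<Rightarrow> real" where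
  "regret u s t = (case t of (p, a, b) \<Rightarrow> if s p = a then u p s - u p (s(p := b)) else 0)"

lemma sum_regret_eq:
  assumes "finite (PiE N S)"
  shows "(\<Sum>s\<in>{s\<in>PiE N S. s p = a}. x s * (u p s - u p (s(p := b))))
       = (\<Sum>s\<in>PiE N S. x s * regret u s (p, a, b))"
proof -
  have "(\<Sum>s\<in>PiE N S. x s * regret u s (p, a, b))
      = (\<Sum>s\<in>PiE N S. if s p = a then x s * (u p s - u p (s(p := b))) else 0)"
    by (rule sum.cong) (auto simp: regret_def)
  then show ?thesis using assms by (simp add: sum.inter_filter)
qed

lemma CE_if_expected_regret_nonneg:
  assumes "finite (PiE N S)" "is_dist N S x"
    and "\<And>t. t \<in> deviations N S \<Longrightarrow> 0 \<le> (\<Sum>s\<in>PiE N S. x s * regret u s t)"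
  shows "x \<in> CE N S u N"
  using assms by (auto simp: CE_def deviations_def sum_regret_eq)

lemma expected_regret_product:
  fixes \<mu> :: "'p \<Rightarrow> 's \<Rightarrow> real" and u :: "'p \<Rightarrow> ('p \<Rightarrow> 's) \<Rightarrow> real"
  assumes fin: "finite N" "\<And>q. q \<in> N \<Longrightarrow> finite (S q)" and p: "p \<in> N" "a \<in> S p" "b \<in> S p"
  defines "V \<equiv> \<lambda>c. \<Sum>s\<in>{s\<in>PiE N S. s p = c}. (\<Prod>q\<in>N - {p}. \<mu> q (s q)) * u p s"
  shows "(\<Sum>s\<in>PiE N S. (\<Prod>q\<in>N. \<mu> q (s q)) * regret u s (p, a, b)) = \<mu> p a * (V a - V b)"
proof -
  define g where "g s = (\<Prod>q\<in>N - {p}. \<mu> q (s q))" for s :: "'p \<Rightarrow> 's"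
  define P where "P c = {s\<in>PiE N S. s p = c}" for c
  have g_upd: "g (s(p := c)) = g s" for s c
    unfolding g_def by (rule prod.cong) auto
  have upd: "s(p := c) \<in> PiE N S" if "s \<in> PiE N S" "c \<in> S p" for s c
    using PiE_fun_upd[OF that(2,1)] p(1) by (simp add: insert_absorb)
  have prod_split: "(\<Prod>q\<in>N. \<mu> q (s q)) = \<mu> p (s p) * g s" for s
    unfolding g_def using fin(1) p(1) by (simp add: prod.remove)
  have "(\<Sum>s\<in>PiE N S. (\<Prod>q\<in>N. \<mu> q (s q)) * regret u s (p, a, b))
      = (\<Sum>s\<in>P a. (\<Prod>q\<in>N. \<mu> q (s q)) * (u p s - u p (s(p := b))))"
    unfolding P_def using fin by (intro sum_regret_eq[symmetric] finite_PiE)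
  also have "\<dots> = (\<Sum>s\<in>P a. \<mu> p a * (g s * u p s - g s * u p (s(p := b))))"
    unfolding prod_split by (rule sum.cong) (auto simp: P_def algebra_simps)
  also have "\<dots> = \<mu> p a * (V a - (\<Sum>s\<in>P a. g s * u p (s(p := b))))"
    by (simp add: V_def P_def g_def sum_subtractf flip: sum_distrib_left)
  also have "(\<Sum>s\<in>P a. g s * u p (s(p := b))) = V b"
    unfolding V_def g_def[symmetric] P_def
    by (rule sum.reindex_bij_witness[of _ "\<lambda>s. s(p := a)" "\<lambda>s. s(p := b)"])
       (auto simp: g_upd upd p)
  finally show ?thesis .
qed

text \<open>Under the product of stationary distributions the expected regrets \<open>\<mu>\<^sub>p a (V a - V b)\<close>,
  weighted by \<open>Q\<close>, cancel: the stationarity equations equate the two resulting sums.\<close>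
lemma weighted_regret_product_stationary:
  fixes \<mu> :: "'p \<Rightarrow> 's \<Rightarrow> real" and Q :: "'s \<Rightarrow> 's \<Rightarrow> real"
  assumes fin: "finite N" "\<And>q. q \<in> N \<Longrightarrow> finite (S q)" and p: "p \<in> N"
    and stat: "\<And>b. b \<in> S p \<Longrightarrow> (\<Sum>a\<in>S p. \<mu> p a * Q a b) = \<mu> p b * (\<Sum>c\<in>S p. Q b c)"
  shows "(\<Sum>(a, b)\<in>S p \<times> S p. Q a b * (\<Sum>s\<in>PiE N S. (\<Prod>q\<in>N. \<mu> q (s q)) * regret u s (p, a, b))) = 0"
proof -
  define V where "V c = (\<Sum>s\<in>{s\<in>PiE N S. s p = c}. (\<Prod>q\<in>N - {p}. \<mu> q (s q)) * u p s)" for c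
  have "(\<Sum>(a, b)\<in>S p \<times> S p. Q a b * (\<Sum>s\<in>PiE N S. (\<Prod>q\<in>N. \<mu> q (s q)) * regret u s (p, a, b)))
      = (\<Sum>(a, b)\<in>S p \<times> S p. Q a b * (\<mu> p a * (V a - V b)))"
  proof (intro sum.cong refl, clarify)
    fix a b assume "a \<in> S p" "b \<in> S p"
    from expected_regret_product[where S = S and \<mu> = \<mu> and u = u, OF fin p this]
    show "Q a b * (\<Sum>s\<in>PiE N S. (\<Prod>q\<in>N. \<mu> q (s q)) * regret u s (p, a, b))
        = Q a b * (\<mu> p a * (V a - V b))"
      by (simp only: V_def)
  qed
  also have "\<dots> = (\<Sum>a\<in>S p. \<Sum>b\<in>S p. Q a b * \<mu> p a * V a) - (\<Sum>a\<in>S p. \<Sum>b\<in>S p. Q a b * \<mu> p a * V b)"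
    by (simp add: sum.cartesian_product[symmetric] algebra_simps sum_subtractf)
  also have "(\<Sum>a\<in>S p. \<Sum>b\<in>S p. Q a b * \<mu> p a * V b) = (\<Sum>b\<in>S p. V b * (\<Sum>a\<in>S p. \<mu> p a * Q a b))"
    by (subst sum.swap) (simp add: sum_distrib_left algebra_simps)
  also have "\<dots> = (\<Sum>b\<in>S p. V b * (\<mu> p b * (\<Sum>c\<in>S p. Q b c)))"
    by (rule sum.cong) (auto simp: stat)
  also have "(\<Sum>a\<in>S p. \<Sum>b\<in>S p. Q a b * \<mu> p a * V a) = (\<Sum>a\<in>S p. V a * (\<mu> p a * (\<Sum>c\<in>S p. Q a c)))"
    by (rule sum.cong) (auto simp: sum_distrib_left sum_distrib_right algebra_simps)
  finally show ?thesis by simp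
qed

lemma product_stationary_expected_weighted_regret:
  fixes \<mu> :: "'p \<Rightarrow> 's \<Rightarrow> real"
  assumes fin: "finite N" "\<And>p. p \<in> N \<Longrightarrow> finite (S p)"
    and stat: "\<And>p b. p \<in> N \<Longrightarrow> b \<in> S p
                 \<Longrightarrow> (\<Sum>a\<in>S p. \<mu> p a * \<nu> (p, a, b)) = \<mu> p b * (\<Sum>c\<in>S p. \<nu> (p, b, c))"
  shows "(\<Sum>s\<in>PiE N S. (\<Prod>q\<in>N. \<mu> q (s q)) * (\<Sum>t\<in>deviations N S. regret u s t * \<nu> t)) = 0"
proof -
  define x where "x s = (\<Prod>q\<in>N. \<mu> q (s q))" for s
  have "(\<Sum>s\<in>PiE N S. x s * (\<Sum>t\<in>deviations N S. regret u s t * \<nu> t))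
      = (\<Sum>s\<in>PiE N S. \<Sum>t\<in>deviations N S. x s * (regret u s t * \<nu> t))"
    by (simp add: sum_distrib_left)
  also have "\<dots> = (\<Sum>t\<in>deviations N S. \<Sum>s\<in>PiE N S. x s * (regret u s t * \<nu> t))"
    by (rule sum.swap)
  also have "\<dots> = (\<Sum>t\<in>deviations N S. \<nu> t * (\<Sum>s\<in>PiE N S. x s * regret u s t))"
    by (simp add: sum_distrib_left mult_ac)
  also have "\<dots> = (\<Sum>p\<in>N. \<Sum>(a, b)\<in>S p \<times> S p. \<nu> (p, a, b) * (\<Sum>s\<in>PiE N S. x s * regret u s (p, a, b)))"
    unfolding deviations_def using fin by (subst sum.Sigma) (auto simp: split_def)
  also have "\<dots> = 0"
    unfolding x_def using stat by (intro sum.neutral ballI weighted_regret_product_stationary[OF fin]) auto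
  finally show ?thesis by (simp add: x_def)
qed

lemma convex_combination_eq_0_imp_nonneg:
  fixes x f :: "'a \<Rightarrow> real"
  assumes "finite A" "\<forall>a\<in>A. 0 \<le> x a" "(\<Sum>a\<in>A. x a) = 1" "(\<Sum>a\<in>A. x a * f a) = 0"
  shows "\<exists>a\<in>A. 0 \<le> f a"
proof (rule ccontr)
  assume "\<not> ?thesis"
  then have neg: "\<forall>a\<in>A. f a < 0" by auto
  have "\<exists>a\<in>A. 0 < x a"
    using assms(2,3) sum_nonpos[of A x] by (force simp: not_less)
  then have "(\<Sum>a\<in>A. x a * f a) < (\<Sum>a\<in>A. 0)"
    using assms(2) neg
    by (intro sum_strict_mono_ex1[OF assms(1)]) (auto intro: mult_pos_neg mult_nonneg_nonpos less_imp_le)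
  with assms(4) show False by simp
qed

lemma exists_profile_weighted_regret_nonneg:
  assumes fin: "finite N" and S: "\<forall>p\<in>N. finite (S p) \<and> S p \<noteq> {}"
    and \<nu>: "\<forall>t\<in>deviations N S. 0 \<le> \<nu> t"
  shows "\<exists>s\<in>PiE N S. 0 \<le> (\<Sum>t\<in>deviations N S. regret u s t * \<nu> t)"
proof -
  have "\<forall>p\<in>N. \<exists>m. (\<forall>a\<in>S p. 0 \<le> m a) \<and> (\<Sum>a\<in>S p. m a) = 1 \<and>
           (\<forall>b\<in>S p. (\<Sum>a\<in>S p. m a * \<nu> (p, a, b)) = m b * (\<Sum>c\<in>S p. \<nu> (p, b, c)))"
    using S \<nu> by (intro ballI stationary_distribution_exists) (auto simp: deviations_def)
  from bchoice[OF this] obtain \<mu> where \<mu>: "\<forall>p\<in>N. (\<forall>a\<in>S p. 0 \<le> \<mu> p a) \<and> (\<Sum>a\<in>S p. \<mu> p a) = 1 \<and>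
           (\<forall>b\<in>S p. (\<Sum>a\<in>S p. \<mu> p a * \<nu> (p, a, b)) = \<mu> p b * (\<Sum>c\<in>S p. \<nu> (p, b, c)))"
    by blast
  show ?thesis
  proof (rule convex_combination_eq_0_imp_nonneg)
    show "finite (PiE N S)" using fin S by (simp add: finite_PiE)
    show "\<forall>s\<in>PiE N S. 0 \<le> (\<Prod>q\<in>N. \<mu> q (s q))"
      using \<mu> by (auto simp: PiE_iff intro!: prod_nonneg)
    have "(\<Sum>s\<in>PiE N S. \<Prod>q\<in>N. \<mu> q (s q)) = (\<Prod>q\<in>N. \<Sum>a\<in>S q. \<mu> q a)"
      using fin S by (subst prod_sum_PiE) auto
    also have "\<dots> = 1" using \<mu> by (intro prod.neutral) auto
    finally show "(\<Sum>s\<in>PiE N S. \<Prod>q\<in>N. \<mu> q (s q)) = 1" .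
    show "(\<Sum>s\<in>PiE N S. (\<Prod>q\<in>N. \<mu> q (s q)) * (\<Sum>t\<in>deviations N S. regret u s t * \<nu> t)) = 0"
      using \<mu> S by (intro product_stationary_expected_weighted_regret[OF fin]) auto
  qed
qed

text \<open>Hart and Schmeidler's argument: by the alternative, either some positive combination of
  the regret vectors of pure profiles is nonnegative, which normalises to a correlated
  equilibrium, or some nonnegative weighting makes all their weighted regrets negative, which
  the previous lemma rules out.\<close>
theorem CE_nonempty:
  assumes fin: "finite N" and S: "\<forall>p\<in>N. finite (S p) \<and> S p \<noteq> {}"
  shows "CE N S u N \<noteq> {}"
proof -
  let ?P = "PiE N S" and ?T = "deviations N S"
  have fin_P: "finite ?P" using fin S by (simp add: finite_PiE)
  have fin_T: "finite ?T" using fin S by (simp add: deviations_def)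
  have "\<not> (\<exists>\<nu>. (\<forall>t\<in>?T. 0 \<le> \<nu> t) \<and> (\<forall>r\<in>regret u ` ?P. (\<Sum>t\<in>?T. r t * \<nu> t) < 0))"
  proof clarify
    fix \<nu> assume "\<forall>t\<in>?T. 0 \<le> \<nu> t" "\<forall>r\<in>regret u ` ?P. (\<Sum>t\<in>?T. r t * \<nu> t) < 0"
    then show False using exists_profile_weighted_regret_nonneg[OF fin S, of \<nu> u] by fastforce
  qed
  then obtain v where v: "v \<in> positive_combinations (regret u ` ?P)" "\<forall>t\<in>?T. 0 \<le> v t"
    using positive_combination_or_separation[OF fin_T, of "regret u ` ?P"] fin_P by blast
  obtain w where w: "\<forall>s\<in>?P. 0 \<le> w s" "0 < (\<Sum>s\<in>?P. w s)" "\<forall>t. v t = (\<Sum>s\<in>?P. w s * regret u s t)"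
    using positive_combinations_image_weights[OF v(1) fin_P] by blast
  define W where "W = (\<Sum>s\<in>?P. w s)"
  define x where "x s = (if s \<in> ?P then w s / W else 0)" for s
  have "(\<Sum>s\<in>?P. x s) = 1"
    using w(2) by (simp add: x_def W_def flip: sum_divide_distrib)
  then have "is_dist N S x"
    using w(1,2) by (auto simp: is_dist_def x_def W_def)
  moreover have "(\<Sum>s\<in>?P. x s * regret u s t) = v t / W" for t
    by (simp add: w(3) x_def sum_divide_distrib)
  ultimately have "x \<in> CE N S u N"
    using v(2) w(2) by (intro CE_if_expected_regret_nonneg[OF fin_P]) (auto simp: W_def)
  then show ?thesis by blast
qed

lemma CE_antimono: "P' \<subseteq> P \<Longrightarrow> CE N S u P \<subseteq> CE N S u P'"
  unfolding CE_def by blast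

lemma oracle_obj_eq_sum_Eutil:
  "finite N \<Longrightarrow> oracle_obj N S u c y = (\<Sum>q\<in>N. c q * Eutil N S u q y)"
  unfolding oracle_obj_def Eutil_def by (simp add: sum_distrib_left mult_ac)

lemma oracle_obj_indicator:
  assumes "finite N" "A \<subseteq> N"
  shows "oracle_obj N S u (\<lambda>r. if r \<in> A then c else 0) y = c * (\<Sum>p\<in>A. Eutil N S u p y)"
proof -
  have "oracle_obj N S u (\<lambda>r. if r \<in> A then c else 0) y = (\<Sum>r\<in>N. if r \<in> A then c * Eutil N S u r y else 0)"
    unfolding oracle_obj_eq_sum_Eutil[OF assms(1)] by (rule sum.cong) auto
  also have "\<dots> = c * (\<Sum>p\<in>A. Eutil N S u p y)"
    using assms by (simp add: sum.If_cases Int_absorb1 sum_distrib_left)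
  finally show ?thesis .
qed

lemma valid_oracleD:
  assumes "valid_oracle N S u orc" "\<forall>p\<in>N. \<bar>c p\<bar> \<le> 1" "Ls \<subseteq> N" "dom xs \<subseteq> Ls"
    and "\<forall>p y. xs p = Some y \<longrightarrow> is_dist N S y" "z \<in> oracle_feasible N S u Ls xs"
  shows "orc (c, Ls, xs) \<in> oracle_feasible N S u Ls xs"
    and "\<And>y. y \<in> oracle_feasible N S u Ls xs \<Longrightarrow> oracle_obj N S u c y \<le> oracle_obj N S u c (orc (c, Ls, xs))"
  using assms unfolding valid_oracle_def by blast+

text \<open>The coefficients are written as the indicator of \<open>{q}\<close>, scaled by \<open>-1\<close>, to share the
  objective computation with the welfare query.\<close>
definition threat_query :: "'p \<Rightarrow> ('p, 's) query" where
  "threat_query q = ((\<lambda>r. if r \<in> {q} then -1 else 0), {}, Map.empty)"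

definition welfare_query :: "'p set \<Rightarrow> ('p \<Rightarrow> ('p, 's) dist option) \<Rightarrow> ('p, 's) query" where
  "welfare_query L m = ((\<lambda>r. if r \<in> L then 1 else 0), L, m)"

definition threats :: "(('p, 's) query \<Rightarrow> ('p, 's) dist) \<Rightarrow> 'p set \<Rightarrow> 'p \<Rightarrow> ('p, 's) dist option" where
  "threats orc L q = (if q \<in> L then Some (orc (threat_query q)) else None)"

lemma threat_query_answer:
  assumes fin: "finite N" and S: "\<forall>p\<in>N. finite (S p) \<and> S p \<noteq> {}"
    and orc: "valid_oracle N S u orc" and q: "q \<in> N"
  shows "orc (threat_query q) \<in> CE N S u N"
    and "\<And>y. y \<in> CE N S u N \<Longrightarrow> Eutil N S u q (orc (threat_query q)) \<le> Eutil N S u q y"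
proof -
  have feasible: "oracle_feasible N S u {} Map.empty = CE N S u N"
    by (simp add: oracle_feasible_def)
  obtain z where "z \<in> CE N S u N" using CE_nonempty[OF fin S] by blast
  note answer = valid_oracleD[OF orc, where c = "\<lambda>r. if r \<in> {q} then -1 else 0" and Ls = "{}"
      and xs = Map.empty, folded threat_query_def, unfolded feasible, OF _ _ _ _ this]
  show "orc (threat_query q) \<in> CE N S u N"
    using answer(1) by simp
  have "oracle_obj N S u (\<lambda>r. if r \<in> {q} then -1 else 0) y = - Eutil N S u q y" for y
    using oracle_obj_indicator[OF fin, of "{q}" S u "-1"] q by simp
  then show "Eutil N S u q (orc (threat_query q)) \<le> Eutil N S u q y" if "y \<in> CE N S u N" for y
    using answer(2)[of y] that by simp
qed

lemma welfare_query_answer: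
  assumes fin: "finite N" and S: "\<forall>p\<in>N. finite (S p) \<and> S p \<noteq> {}"
    and orc: "valid_oracle N S u orc" and L: "L \<subseteq> N"
  defines "K \<equiv> {y \<in> CE N S u (N - L). \<forall>p\<in>L. Eutil N S u p (orc (threat_query p)) \<le> Eutil N S u p y}"
  shows "orc (welfare_query L (threats orc L)) \<in> K"
    and "\<And>y. y \<in> K \<Longrightarrow> (\<Sum>p\<in>L. Eutil N S u p y) \<le> (\<Sum>p\<in>L. Eutil N S u p (orc (welfare_query L (threats orc L))))"
proof -
  have feasible: "oracle_feasible N S u L (threats orc L) = K"
    by (auto simp: K_def oracle_feasible_def threats_def split: if_splits)
  obtain z where z: "z \<in> CE N S u N" using CE_nonempty[OF fin S] by blast
  then have z_K: "z \<in> K"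
    using threat_query_answer(2)[OF fin S orc] L CE_antimono[of "N - L" N N S u]
    by (auto simp: K_def)
  have threats_dist: "\<forall>p y. threats orc L p = Some y \<longrightarrow> is_dist N S y"
    using threat_query_answer(1)[OF fin S orc] L by (auto simp: threats_def CE_def)
  have threats_dom: "dom (threats orc L) \<subseteq> L"
    by (auto simp: threats_def split: if_splits)
  note answer = valid_oracleD[OF orc, where c = "\<lambda>r. if r \<in> L then 1 else 0" and Ls = L
      and xs = "threats orc L", folded welfare_query_def, unfolded feasible,
      OF _ L threats_dom threats_dist z_K]
  show "orc (welfare_query L (threats orc L)) \<in> K"
    using answer(1) by simp
  have "oracle_obj N S u (\<lambda>r. if r \<in> L then 1 else 0) y = (\<Sum>p\<in>L. Eutil N S u p y)" for y
    using oracle_obj_indicator[OF fin L, of S u 1] by simp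
  then show "(\<Sum>p\<in>L. Eutil N S u p y) \<le> (\<Sum>p\<in>L. Eutil N S u p (orc (welfare_query L (threats orc L))))"
    if "y \<in> K" for y
    using answer(2)[of y] that by simp
qed

lemma pareto_Nil_if_sum_maximal:
  assumes "finite L" "xx \<in> X'"
    and "\<And>yy. yy \<in> X' \<Longrightarrow> \<forall>p\<in>L. Eutil N S u p (xx []) \<le> Eutil N S u p (yy [])
           \<Longrightarrow> (\<Sum>p\<in>L. Eutil N S u p (yy [])) \<le> (\<Sum>p\<in>L. Eutil N S u p (xx []))"
  shows "xx [] \<in> pareto N S u L [] X'"
proof -
  have "\<not> ((\<forall>p\<in>L. Eutil N S u p (xx []) \<le> Eutil N S u p (yy []))
           \<and> (\<exists>p\<in>L. Eutil N S u p (xx []) < Eutil N S u p (yy [])))" if "yy \<in> X'" for yy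
  proof
    assume dominates: "(\<forall>p\<in>L. Eutil N S u p (xx []) \<le> Eutil N S u p (yy []))
           \<and> (\<exists>p\<in>L. Eutil N S u p (xx []) < Eutil N S u p (yy []))"
    then have "(\<Sum>p\<in>L. Eutil N S u p (xx [])) < (\<Sum>p\<in>L. Eutil N S u p (yy []))"
      by (intro sum_strict_mono_ex1[OF assms(1)]) auto
    with assms(3)[OF that] dominates show False by linarith
  qed
  then show ?thesis using assms(2) by (auto simp: pareto_def Let_def)
qed

definition threat_profile :: "('p, 's) dist \<Rightarrow> ('p \<Rightarrow> ('p, 's) dist) \<Rightarrow> 'p list \<Rightarrow> ('p, 's) dist" where
  "threat_profile x0 W \<pi> = (if \<pi> = [] then x0 else W (last \<pi>))"

lemma threat_profile_perfectly_stable: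
  assumes "L \<subseteq> N" "F \<subseteq> N"
    and W_CE: "\<And>q. q \<in> L \<Longrightarrow> W q \<in> CE N S u N"
    and W_min: "\<And>q y. q \<in> L \<Longrightarrow> y \<in> CE N S u N \<Longrightarrow> Eutil N S u q (W q) \<le> Eutil N S u q y"
    and x0: "x0 \<in> CE N S u F" "\<And>p. p \<in> L \<Longrightarrow> Eutil N S u p (W p) \<le> Eutil N S u p x0"
  shows "threat_profile x0 W \<in> XPS N S u L F"
proof -
  have last: "last \<pi> \<in> L" "threat_profile x0 W \<pi> = W (last \<pi>)"
    if "\<pi> \<in> ordsubs L" "\<pi> \<noteq> []" for \<pi>
    using that last_in_set[of \<pi>] by (auto simp: ordsubs_def threat_profile_def)
  have "threat_profile x0 W \<pi> \<in> CE N S u (set \<pi> \<union> F)" if \<pi>: "\<pi> \<in> ordsubs L" for \<pi>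
  proof (cases "\<pi> = []")
    case False
    have "set \<pi> \<union> F \<subseteq> N" using \<pi> assms(1,2) by (auto simp: ordsubs_def)
    from CE_antimono[OF this, of N S u] show ?thesis using last[OF \<pi> False] W_CE by auto
  qed (simp add: threat_profile_def x0(1))
  moreover have "stable_at N S u L (threat_profile x0 W) \<pi>" if \<pi>: "\<pi> \<in> ordsubs L" for \<pi>
  proof (unfold stable_at_def, intro ballI)
    fix p assume p: "p \<in> L - set \<pi>"
    have "Eutil N S u p (W p) \<le> Eutil N S u p (threat_profile x0 W \<pi>)"
    proof (cases "\<pi> = []")
      case False
      then show ?thesis using last[OF \<pi> False] W_CE W_min p by auto
    qed (use x0(2) p in \<open>simp add: threat_profile_def\<close>)
    then show "Eutil N S u p (threat_profile x0 W (\<pi> @ [p])) \<le> Eutil N S u p (threat_profile x0 W \<pi>)"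
      by (simp add: threat_profile_def)
  qed
  ultimately show ?thesis by (simp add: XPS_def BigX_def)
qed

theorem threat_profile_SCE_PA:
  assumes fin: "finite N" and S: "\<forall>p\<in>N. finite (S p) \<and> S p \<noteq> {}"
    and LF: "L \<union> F = N" "L \<inter> F = {}" and orc: "valid_oracle N S u orc"
  shows "threat_profile (orc (welfare_query L (threats orc L))) (\<lambda>q. the (threats orc L q))
           \<in> SCE_PA N S u L F"
proof -
  define W where "W q = the (threats orc L q)" for q
  define x0 where "x0 = orc (welfare_query L (threats orc L))"
  have L: "L \<subseteq> N" and F: "F = N - L" using LF by auto
  have W: "W q = orc (threat_query q)" if "q \<in> L" for q
    using that by (simp add: W_def threats_def)
  define K where "K = {y \<in> CE N S u F. \<forall>p\<in>L. Eutil N S u p (W p) \<le> Eutil N S u p y}"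
  have K_eq: "K = {y \<in> CE N S u (N - L). \<forall>p\<in>L. Eutil N S u p (orc (threat_query p)) \<le> Eutil N S u p y}"
    by (simp add: K_def F W)
  have x0_K: "x0 \<in> K"
    using welfare_query_answer(1)[OF fin S orc L] by (simp add: K_eq x0_def)
  have PS: "threat_profile x0 W \<in> XPS N S u L F"
    using threat_query_answer[OF fin S orc] x0_K L
    by (intro threat_profile_perfectly_stable) (auto simp: W K_def F)
  have "threat_profile x0 W [] \<in> pareto N S u L [] (XPS N S u L F)"
  proof (rule pareto_Nil_if_sum_maximal[OF finite_subset[OF L fin] PS])
    fix yy assume yy: "yy \<in> XPS N S u L F"
      "\<forall>p\<in>L. Eutil N S u p (threat_profile x0 W []) \<le> Eutil N S u p (yy [])"
    have "[] \<in> ordsubs L" by (simp add: ordsubs_def)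
    then have "yy [] \<in> CE N S u (set [] \<union> F)"
      using yy(1) unfolding XPS_def BigX_def by blast
    with yy(2) x0_K have "yy [] \<in> K"
      by (force simp: K_def threat_profile_def)
    then show "(\<Sum>p\<in>L. Eutil N S u p (yy [])) \<le> (\<Sum>p\<in>L. Eutil N S u p (threat_profile x0 W []))"
      using welfare_query_answer(2)[OF fin S orc L] by (simp add: K_eq x0_def threat_profile_def)
  qed
  then show ?thesis using PS by (simp add: SCE_PA_def W_def[abs_def] x0_def)
qed

primrec sce_pa_prog :: "'p set \<Rightarrow> 'p list \<Rightarrow> ('p \<Rightarrow> ('p, 's) dist option)
    \<Rightarrow> (('p, 's) query, ('p, 's) dist, 'p list \<Rightarrow> ('p, 's) dist) oprog" where
  "sce_pa_prog L [] m = Ask (welfare_query L m) (\<lambda>x. Ret (threat_profile x (\<lambda>q. the (m q))))"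
| "sce_pa_prog L (p # ps) m = Ask (threat_query p) (\<lambda>w. sce_pa_prog L ps (m(p \<mapsto> w)))"

lemma num_queries_sce_pa_prog: "num_queries orc (sce_pa_prog L ps m) = Suc (length ps)"
  by (induction ps arbitrary: m) auto

lemma run_sce_pa_prog:
  "run orc (sce_pa_prog L ps m)
     = (let m' = (\<lambda>q. if q \<in> set ps then Some (orc (threat_query q)) else m q)
        in threat_profile (orc (welfare_query L m')) (\<lambda>q. the (m' q)))"
proof (induction ps arbitrary: m)
  case (Cons p ps)
  have "(\<lambda>q. if q \<in> set ps then Some (orc (threat_query q)) else (m(p \<mapsto> orc (threat_query p))) q)
      = (\<lambda>q. if q \<in> set (p # ps) then Some (orc (threat_query q)) else m q)"
    by auto
  then show ?case by (simp add: Cons.IH)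
qed simp

theorem theorem4:
  shows "\<exists>alg :: 'p set \<Rightarrow> ('p \<Rightarrow> 's set) \<Rightarrow> 'p set \<Rightarrow> 'p set
                 \<Rightarrow> (('p,'s) query, ('p,'s) dist, 'p list \<Rightarrow> ('p,'s) dist) oprog.
    \<forall>(N :: 'p set) (S :: 'p \<Rightarrow> 's set) u L F orc.
      finite N \<and> (\<forall>p\<in>N. finite (S p) \<and> S p \<noteq> {}) \<and> L \<union> F = N \<and> L \<inter> F = {}
      \<and> valid_oracle N S u orc
      \<longrightarrow> num_queries orc (alg N S L F) \<le> card L + 1
        \<and> run orc (alg N S L F) \<in> SCE_PA N S u L F"
proof (intro exI[of _ "\<lambda>N S L F. sce_pa_prog L (SOME ps. distinct ps \<and> set ps = L) Map.empty"] allI impI)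
  fix N :: "'p set" and S :: "'p \<Rightarrow> 's set" and u L F and orc :: "('p, 's) query \<Rightarrow> ('p, 's) dist"
  assume H: "finite N \<and> (\<forall>p\<in>N. finite (S p) \<and> S p \<noteq> {}) \<and> L \<union> F = N \<and> L \<inter> F = {}
      \<and> valid_oracle N S u orc"
  then have "finite N" "\<forall>p\<in>N. finite (S p) \<and> S p \<noteq> {}" "L \<union> F = N" "L \<inter> F = {}"
    "valid_oracle N S u orc"
    by blast+
  define ps where "ps = (SOME ps. distinct ps \<and> set ps = L)"
  have "\<exists>ps. distinct ps \<and> set ps = L"
    using finite_distinct_list[OF finite_subset[of L N]] H by blast
  from someI_ex[OF this] have ps: "distinct ps" "set ps = L"
    unfolding ps_def by blast+
  have "run orc (sce_pa_prog L ps Map.empty)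
      = threat_profile (orc (welfare_query L (threats orc L))) (\<lambda>q. the (threats orc L q))"
    by (simp add: run_sce_pa_prog ps(2) threats_def[abs_def])
  moreover have "num_queries orc (sce_pa_prog L ps Map.empty) = card L + 1"
    using num_queries_sce_pa_prog distinct_card[OF ps(1)] ps(2) by simp
  moreover have "threat_profile (orc (welfare_query L (threats orc L))) (\<lambda>q. the (threats orc L q))
      \<in> SCE_PA N S u L F"
    by (rule threat_profile_SCE_PA) fact+
  ultimately show "num_queries orc (sce_pa_prog L ps Map.empty) \<le> card L + 1
      \<and> run orc (sce_pa_prog L ps Map.empty) \<in> SCE_PA N S u L F"
    by simp
qed

end
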